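(* Let $f\in C^\infty(\mathbb R^d;\mathbb R)$ satisfy the Morse–Bott assumption, let $\Gamma$ be a separating saddle manifold of $f$ and $\sigma=f(\Gamma)$. Then there exist exactly two connected components $B_+$, $B_-$ of $X_\sigma=\{x;\ f(x)<\sigma\}$ such that $\Gamma\cap\overline{B_\pm}\ne\emptyset$. Moreover $\Gamma\subset\overline{B_+}\cap\overline{B_-}$.
   Context: Morse–Bott assumption: the set of critical points of $f$ is a finite disjoint union of boundaryless compact connected submanifolds (critical manifolds) such that at every point the Hessian of $f$ restricted to the normal space is non-degenerate. A saddle manifold is a critical manifold along which $\operatorname{Hess} f$ has exactly one negative eigenvalue. A saddle manifold $\Gamma$ with $\sigma=f(\Gamma)$ is locally separating if, for all $r>0$ small enough, $X_\sigma\cap(\Gamma+B(0,r))$ has exactly two connected components $A_+(r)$ and $A_-(r)$; it is separating if moreover $A_+(r)$ and $A_-(r)$ belong to two disjoint connected components of $X_\sigma$. *)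

theory Defs
  imports "HOL-Analysis.Analysis"
begin

definition smooth_on :: "'a::euclidean_space set \<Rightarrow> ('a \<Rightarrow> 'b::real_normed_vector) \<Rightarrow> bool" where
  "smooth_on U f \<longleftrightarrow>
     (\<exists>D :: nat \<Rightarrow> 'a \<Rightarrow> 'a list \<Rightarrow> 'b.
        (\<forall>x\<in>U. D 0 x [] = f x) \<and>
        (\<forall>n x vs. x \<in> U \<and> length vs = n \<longrightarrow>
            ((\<lambda>y. D n y vs) has_derivative (\<lambda>h. D (Suc n) x (h # vs))) (at x)))"

text \<open>Boundaryless embedded smooth submanifold of the Euclidean space:
 locally straightened by a diffeomorphism onto a linear subspace.\<close>
definition submanifold :: "'a::euclidean_space set \<Rightarrow> bool" where
  "submanifold M \<longleftrightarrow>
     (\<forall>p\<in>M. \<exists>U (\<phi>::'a \<Rightarrow> 'a) L. open U \<and> p \<in> U \<and> smooth_on U \<phi> \<and> inj_on \<phi> U \<and>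
        open (\<phi> ` U) \<and> smooth_on (\<phi> ` U) (inv_into U \<phi>) \<and>
        subspace L \<and> \<phi> ` (M \<inter> U) = \<phi> ` U \<inter> L)"

definition tangent_space :: "'a::euclidean_space set \<Rightarrow> 'a \<Rightarrow> 'a set" where
  "tangent_space M p =
     {v. \<exists>\<gamma>::real \<Rightarrow> 'a. \<gamma> 0 = p \<and> (\<forall>t\<in>{-1<..<1}. \<gamma> t \<in> M) \<and>
          (\<gamma> has_vector_derivative v) (at 0)}"

definition normal_space :: "'a::euclidean_space set \<Rightarrow> 'a \<Rightarrow> 'a set" where
  "normal_space M p = {w. \<forall>v\<in>tangent_space M p. w \<bullet> v = 0}"

definition crit :: "('a::euclidean_space \<Rightarrow> real) \<Rightarrow> 'a set" where
  "crit f = {x. (f has_derivative (\<lambda>h. 0)) (at x)}"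

definition hess :: "('a::euclidean_space \<Rightarrow> real) \<Rightarrow> 'a \<Rightarrow> 'a \<Rightarrow> 'a \<Rightarrow> real" where
  "hess f x u w = frechet_derivative (\<lambda>y. frechet_derivative f (at y) u) (at x) w"

definition hess_op :: "('a::euclidean_space \<Rightarrow> real) \<Rightarrow> 'a \<Rightarrow> 'a \<Rightarrow> 'a" where
  "hess_op f x u = (\<Sum>b\<in>Basis. hess f x u b *\<^sub>R b)"

definition hess_eigenvalues :: "('a::euclidean_space \<Rightarrow> real) \<Rightarrow> 'a \<Rightarrow> real set" where
  "hess_eigenvalues f x = {c. \<exists>v. v \<noteq> 0 \<and> hess_op f x v = c *\<^sub>R v}"

definition morse_bott :: "('a::euclidean_space \<Rightarrow> real) \<Rightarrow> 'a set set \<Rightarrow> bool" where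
  "morse_bott f \<C> \<longleftrightarrow>
     finite \<C> \<and> disjoint \<C> \<and> \<Union>\<C> = crit f \<and>
     (\<forall>C\<in>\<C>. C \<noteq> {} \<and> compact C \<and> connected C \<and> submanifold C \<and>
        (\<forall>p\<in>C. \<forall>u\<in>normal_space C p.
            (\<forall>w\<in>normal_space C p. hess f p u w = 0) \<longrightarrow> u = 0))"

text \<open>Exactly one negative eigenvalue (counted with multiplicity) at every point.\<close>
definition saddle_manifold :: "('a::euclidean_space \<Rightarrow> real) \<Rightarrow> 'a set set \<Rightarrow> 'a set \<Rightarrow> bool" where
  "saddle_manifold f \<C> \<Gamma> \<longleftrightarrow> \<Gamma> \<in> \<C> \<and>
     (\<forall>p\<in>\<Gamma>. \<exists>c<0. {\<mu>\<in>hess_eigenvalues f p. \<mu> < 0} = {c} \<and>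
          dim {v. hess_op f p v = c *\<^sub>R v} = 1)"

definition sublevel :: "('a \<Rightarrow> real) \<Rightarrow> real \<Rightarrow> 'a set" where
  "sublevel f \<sigma> = {x. f x < \<sigma>}"

definition tube :: "'a::euclidean_space set \<Rightarrow> real \<Rightarrow> 'a set" where
  "tube \<Gamma> r = (\<Union>p\<in>\<Gamma>. ball p r)"

definition locally_separating :: "('a::euclidean_space \<Rightarrow> real) \<Rightarrow> 'a set \<Rightarrow> real \<Rightarrow> bool" where
  "locally_separating f \<Gamma> \<sigma> \<longleftrightarrow>
     (\<exists>r0>0. \<forall>r. 0 < r \<and> r < r0 \<longrightarrow>
        (\<exists>Ap Am. Ap \<noteq> Am \<and> components (sublevel f \<sigma> \<inter> tube \<Gamma> r) = {Ap, Am}))"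

definition separating :: "('a::euclidean_space \<Rightarrow> real) \<Rightarrow> 'a set \<Rightarrow> real \<Rightarrow> bool" where
  "separating f \<Gamma> \<sigma> \<longleftrightarrow>
     (\<exists>r0>0. \<forall>r. 0 < r \<and> r < r0 \<longrightarrow>
        (\<exists>Ap Am. Ap \<noteq> Am \<and> components (sublevel f \<sigma> \<inter> tube \<Gamma> r) = {Ap, Am} \<and>
           (\<exists>Cp\<in>components (sublevel f \<sigma>). \<exists>Cm\<in>components (sublevel f \<sigma>).
              Cp \<inter> Cm = {} \<and> Ap \<subseteq> Cp \<and> Am \<subseteq> Cm)))"

end

theory Submission
  imports Defs
begin

text \<open>
  By the separating hypothesis, for some r > 0 the set X = {f < \<sigma>} meets the r-tube around
  \<Gamma> only inside two disjoint components C+ and C- of X; any component of X whose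
  closure meets \<Gamma> meets that tube, so it is C+ or C-. Both closures meet \<Gamma>: if the
  closure of C+ missed the compact set \<Gamma>, a thinner tube would meet X only inside C-,
  contradicting separation at the smaller radius. Finally \<Gamma> \<inter> closure C\<pm> is closed and
  also open in the connected set \<Gamma>, hence all of \<Gamma>. Near p \<in> \<Gamma> pick v with
  Hess f(p)(v,v) < 0, so f is strictly concave on lines parallel to v. Moving from a point
  of X near p in whichever of the directions \<pm>v along which f starts to decrease, f keeps
  decreasing, so one reaches a small ball around p + Tv or p - Tv inside X; and each
  critical point q near p is the limit of q + sv and of q - sv, s \<rightarrow> 0+, which lie in X
  and connect to both balls.
\<close>

lemma has_real_derivative_along_line:
  fixes F :: "'a::real_normed_vector \<Rightarrow> real"
  assumes "\<And>x. (F has_derivative F' x) (at x)"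
  shows "((\<lambda>s. F (y + s *\<^sub>R v)) has_real_derivative F' (y + s *\<^sub>R v) v) (at s)"
proof -
  have "((\<lambda>s. y + s *\<^sub>R v) has_derivative (\<lambda>t. t *\<^sub>R v)) (at s)"
    by (auto intro!: derivative_eq_intros)
  then have "((\<lambda>s. F (y + s *\<^sub>R v)) has_derivative (\<lambda>t. F' (y + s *\<^sub>R v) (t *\<^sub>R v))) (at s)"
    using has_derivative_compose assms by blast
  moreover have "(\<lambda>t. F' (y + s *\<^sub>R v) (t *\<^sub>R v)) = (*) (F' (y + s *\<^sub>R v) v)"
    using linear_scale[OF has_derivative_linear[OF assms]] by (auto simp: mult.commute)
  ultimately show ?thesis
    by (simp add: has_field_derivative_def)
qed

lemma below_tangent_if_second_derivative_neg:
  fixes g g' g'' :: "real \<Rightarrow> real"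
  assumes "\<And>t. \<bar>t\<bar> \<le> \<bar>s\<bar> \<Longrightarrow> (g has_real_derivative g' t) (at t)"
    and "\<And>t. \<bar>t\<bar> \<le> \<bar>s\<bar> \<Longrightarrow> (g' has_real_derivative g'' t) (at t)"
    and "\<And>t. \<bar>t\<bar> \<le> \<bar>s\<bar> \<Longrightarrow> g'' t < 0"
    and "s \<noteq> 0"
  shows "g s < g 0 + g' 0 * s"
proof -
  define diff where "diff m = (if m = 0 then g else if m = 1 then g' else g'')" for m :: nat
  obtain t where t: "\<bar>t\<bar> \<le> \<bar>s\<bar>"
    and taylor: "g s = (\<Sum>m<2. diff m 0 / fact m * s ^ m) + diff 2 t / fact 2 * s ^ 2"
    using Maclaurin_bi_le[of diff g 2 s] assms(1,2) by (force simp: diff_def less_2_cases_iff)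
  have "g'' t * s\<^sup>2 < 0"
    using assms(3)[OF t] \<open>s \<noteq> 0\<close> by (simp add: mult_neg_pos)
  with taylor show ?thesis
    by (simp add: diff_def numeral_2_eq_2)
qed

lemma smooth_on_UNIV_second_order:
  fixes f :: "'a::euclidean_space \<Rightarrow> real"
  assumes "smooth_on UNIV f"
  shows smooth_on_UNIV_has_derivative: "(f has_derivative frechet_derivative f (at x)) (at x)"
    and smooth_on_UNIV_hess: "((\<lambda>y. frechet_derivative f (at y) u) has_derivative hess f x u) (at x)"
    and smooth_on_UNIV_hess_continuous: "continuous_on UNIV (\<lambda>y. hess f y u w)"
proof -
  obtain D :: "nat \<Rightarrow> 'a \<Rightarrow> 'a list \<Rightarrow> real" where
    D0: "\<And>x. D 0 x [] = f x" and
    D: "\<And>n x vs. length vs = n \<Longrightarrow> ((\<lambda>y. D n y vs) has_derivative (\<lambda>h. D (Suc n) x (h # vs))) (at x)"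
    using assms unfolding smooth_on_def by auto
  have D1: "(f has_derivative (\<lambda>h. D 1 y [h])) (at y)" for y
    using D[of "[]" 0 y] D0 by simp
  then have Df: "frechet_derivative f (at y) = (\<lambda>h. D 1 y [h])" for y
    by (rule frechet_derivative_at[symmetric])
  have D2: "((\<lambda>y. D 1 y [u]) has_derivative (\<lambda>h. D 2 y [h, u])) (at y)" for y u
    using D[of "[u]" 1 y] by (simp add: numeral_2_eq_2)
  then have hess: "hess f y u = (\<lambda>w. D 2 y [w, u])" for y u
    unfolding hess_def Df by (metis frechet_derivative_at)
  show "(f has_derivative frechet_derivative f (at x)) (at x)"
    using D1 Df by simp
  show "((\<lambda>y. frechet_derivative f (at y) u) has_derivative hess f x u) (at x)"
    using D2 Df hess by simp
  have "((\<lambda>y. D 2 y [w, u]) has_derivative (\<lambda>h. D 3 y [h, w, u])) (at y)" for y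
    using D[of "[w, u]" 2 y] by (simp add: numeral_3_eq_3 numeral_2_eq_2)
  then show "continuous_on UNIV (\<lambda>y. hess f y u w)"
    unfolding hess by (meson has_derivative_continuous continuous_at_imp_continuous_on)
qed

lemma below_tangent_along_direction:
  fixes f :: "'a::euclidean_space \<Rightarrow> real"
  assumes sm: "smooth_on UNIV f" and neg: "hess f p v v < 0"
  obtains \<epsilon> T where "0 < \<epsilon>" "0 < T"
    "\<And>y s. y \<in> ball p \<epsilon> \<Longrightarrow> s \<noteq> 0 \<Longrightarrow> \<bar>s\<bar> \<le> T \<Longrightarrow>
       f (y + s *\<^sub>R v) < f y + frechet_derivative f (at y) v * s"
proof -
  have "open {x. hess f x v v < 0}"
    by (rule open_Collect_less[OF smooth_on_UNIV_hess_continuous[OF sm] continuous_on_const])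
  moreover have "p \<in> {x. hess f x v v < 0}"
    using neg by simp
  ultimately obtain \<rho> where \<rho>: "0 < \<rho>" "ball p \<rho> \<subseteq> {x. hess f x v v < 0}"
    by (rule openE)
  define T where "T = \<rho> / (2 * (norm v + 1))"
  have nv: "0 < norm v + 1"
    by (simp add: add_nonneg_pos)
  have T: "0 < T"
    using \<rho>(1) nv by (simp add: T_def)
  have Tv: "T * norm v < \<rho> / 2"
  proof -
    have "T * norm v < T * (norm v + 1)"
      using T by simp
    also have "\<dots> = \<rho> / 2"
      using nv by (simp add: T_def field_simps)
    finally show ?thesis .
  qed
  have concave: "hess f (y + t *\<^sub>R v) v v < 0" if "y \<in> ball p (\<rho> / 2)" "\<bar>t\<bar> \<le> T" for y t
  proof -
    have "dist p (y + t *\<^sub>R v) \<le> dist p y + \<bar>t\<bar> * norm v"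
      using dist_triangle[of p "y + t *\<^sub>R v" y] by (simp add: dist_norm)
    also have "\<dots> < \<rho>"
      using that Tv mult_right_mono[OF \<open>\<bar>t\<bar> \<le> T\<close> norm_ge_zero[of v]] by simp
    finally show ?thesis
      using \<rho>(2) by auto
  qed
  show thesis
  proof (rule that[of "\<rho> / 2" T])
    fix y s assume y: "y \<in> ball p (\<rho> / 2)" and s: "s \<noteq> 0" "\<bar>s\<bar> \<le> T"
    have "f (y + s *\<^sub>R v) < f (y + 0 *\<^sub>R v) + frechet_derivative f (at (y + 0 *\<^sub>R v)) v * s"
    proof (rule below_tangent_if_second_derivative_neg[OF _ _ _ s(1)])
      fix t :: real
      show "((\<lambda>t. f (y + t *\<^sub>R v)) has_real_derivative frechet_derivative f (at (y + t *\<^sub>R v)) v) (at t)"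
        by (rule has_real_derivative_along_line[OF smooth_on_UNIV_has_derivative[OF sm]])
      show "((\<lambda>t. frechet_derivative f (at (y + t *\<^sub>R v)) v) has_real_derivative hess f (y + t *\<^sub>R v) v v) (at t)"
        by (rule has_real_derivative_along_line[OF smooth_on_UNIV_hess[OF sm]])
      assume "\<bar>t\<bar> \<le> \<bar>s\<bar>"
      then show "hess f (y + t *\<^sub>R v) v v < 0"
        using concave[OF y] s(2) by simp
    qed
    then show "f (y + s *\<^sub>R v) < f y + frechet_derivative f (at y) v * s"
      by simp
  qed (use \<rho> T in auto)
qed

lemma descent_along_direction:
  fixes f :: "'a::euclidean_space \<Rightarrow> real"
  assumes sm: "smooth_on UNIV f" and neg: "hess f p v v < 0"
  obtains \<epsilon> T where "0 < \<epsilon>" "0 < T"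
    "\<And>w y s. w = v \<or> w = -v \<Longrightarrow> y \<in> ball p \<epsilon> \<Longrightarrow> frechet_derivative f (at y) w \<le> 0 \<Longrightarrow>
       0 < s \<Longrightarrow> s \<le> T \<Longrightarrow> f (y + s *\<^sub>R w) < f y"
proof -
  obtain \<epsilon> T where "0 < \<epsilon>" "0 < T"
    and below: "\<And>y s. y \<in> ball p \<epsilon> \<Longrightarrow> s \<noteq> 0 \<Longrightarrow> \<bar>s\<bar> \<le> T \<Longrightarrow>
       f (y + s *\<^sub>R v) < f y + frechet_derivative f (at y) v * s"
    using below_tangent_along_direction[OF sm neg] by blast
  have Df_neg: "frechet_derivative f (at y) (-v) = - frechet_derivative f (at y) v" for y
    using linear_neg[OF has_derivative_linear[OF smooth_on_UNIV_has_derivative[OF sm]]] .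
  show thesis
  proof (rule that[OF \<open>0 < \<epsilon>\<close> \<open>0 < T\<close>])
    fix w y s assume w: "w = v \<or> w = -v" and y: "y \<in> ball p \<epsilon>"
      and "frechet_derivative f (at y) w \<le> 0" "0 < s" "s \<le> T"
    from w show "f (y + s *\<^sub>R w) < f y"
    proof (elim disjE)
      assume "w = v"
      then have "frechet_derivative f (at y) v * s \<le> 0"
        using \<open>frechet_derivative f (at y) w \<le> 0\<close> \<open>0 < s\<close> by (simp add: mult_nonpos_nonneg)
      then show ?thesis
        using below[OF y, of s] \<open>w = v\<close> \<open>0 < s\<close> \<open>s \<le> T\<close> by simp
    next
      assume "w = -v"
      then have "frechet_derivative f (at y) v * (-s) \<le> 0"
        using \<open>frechet_derivative f (at y) w \<le> 0\<close> \<open>0 < s\<close> Df_neg by (simp add: mult_nonneg_nonpos)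
      then show ?thesis
        using below[OF y, of "-s"] \<open>w = -v\<close> \<open>0 < s\<close> \<open>s \<le> T\<close> by simp
    qed
  qed
qed

lemma hess_op_inner:
  assumes "linear (hess f x u)"
  shows "w \<bullet> hess_op f x u = hess f x u w"
proof -
  have "w \<bullet> hess_op f x u = (\<Sum>b\<in>Basis. (w \<bullet> b) * hess f x u b)"
    unfolding hess_op_def by (simp add: inner_sum_right mult.commute)
  also have "\<dots> = hess f x u (\<Sum>b\<in>Basis. (w \<bullet> b) *\<^sub>R b)"
    by (simp add: linear_sum[OF assms] linear_scale[OF assms])
  also have "\<dots> = hess f x u w"
    by (simp add: euclidean_representation)
  finally show ?thesis .
qed

lemma saddle_manifold_negative_direction:
  fixes f :: "'a::euclidean_space \<Rightarrow> real"
  assumes sm: "smooth_on UNIV f" and "saddle_manifold f \<C> \<Gamma>" "p \<in> \<Gamma>"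
  obtains v where "hess f p v v < 0"
proof -
  obtain c v where c: "c < 0" and v: "v \<noteq> 0" "hess_op f p v = c *\<^sub>R v"
    using assms(2,3) unfolding saddle_manifold_def hess_eigenvalues_def by blast
  have "hess f p v v = c * (v \<bullet> v)"
    using hess_op_inner[where x = p and u = v and w = v,
        OF has_derivative_linear[OF smooth_on_UNIV_hess[OF sm]]] v(2)
    by simp
  also have "\<dots> < 0"
    using c v(1) by (simp add: mult_neg_pos)
  finally show thesis
    by (rule that)
qed

lemma frechet_derivative_crit: "q \<in> crit f \<Longrightarrow> frechet_derivative f (at q) = (\<lambda>h. 0)"
  unfolding crit_def by (simp add: frechet_derivative_at[symmetric])

lemma open_sublevel: "continuous_on UNIV f \<Longrightarrow> open (sublevel f \<sigma>)"
  unfolding sublevel_def by (rule open_Collect_less) simp_all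

lemma connected_component_via_line_to_ball:
  fixes y w :: "'a::real_normed_vector"
  assumes line: "\<And>t. t \<in> {s..T} \<Longrightarrow> y + t *\<^sub>R w \<in> S" and "s \<le> T"
    and ball: "ball a e \<subseteq> S" and end_in_ball: "y + T *\<^sub>R w \<in> ball a e"
  shows "y + s *\<^sub>R w \<in> connected_component_set S a"
proof -
  define L where "L = (\<lambda>t. y + t *\<^sub>R w) ` {s..T}"
  have "connected L"
    unfolding L_def by (intro connected_continuous_image continuous_intros) auto
  moreover have "y + T *\<^sub>R w \<in> L" "y + s *\<^sub>R w \<in> L"
    unfolding L_def using \<open>s \<le> T\<close> by auto
  ultimately have "connected (L \<union> ball a e)"
    using end_in_ball by (intro connected_Un connected_ball) blast+
  moreover have "L \<union> ball a e \<subseteq> S"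
    unfolding L_def using line ball by auto
  moreover have "a \<in> L \<union> ball a e"
    using end_in_ball by (simp add: le_less_trans[OF zero_le_dist])
  ultimately have "L \<union> ball a e \<subseteq> connected_component_set S a"
    by (intro connected_component_maximal)
  then show ?thesis
    using \<open>y + s *\<^sub>R w \<in> L\<close> by blast
qed

lemma start_mem_closure_of_ray:
  fixes q w :: "'a::real_normed_vector"
  assumes "0 < T" "\<And>s. s \<in> {0<..T} \<Longrightarrow> q + s *\<^sub>R w \<in> K"
  shows "q \<in> closure K"
proof -
  have "(\<lambda>s. q + s *\<^sub>R w) ` {0<..T} \<subseteq> closure K"
    using assms(2) closure_subset by blast
  then have "(\<lambda>s. q + s *\<^sub>R w) ` closure {0<..T} \<subseteq> closure K"
    by (intro image_closure_subset continuous_intros) simp_all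
  moreover have "q \<in> (\<lambda>s. q + s *\<^sub>R w) ` closure {0<..T}"
    using assms(1) by (intro image_eqI[where x = 0]) simp_all
  ultimately show ?thesis
    by blast
qed

lemma sublevel_near_critical_point_along:
  fixes f :: "'a::euclidean_space \<Rightarrow> real"
  assumes cont: "continuous_on UNIV f" and p: "p \<in> crit f" "f p \<le> \<sigma>" and "0 < \<epsilon>" "0 < T"
    and descent: "\<And>y s. y \<in> ball p \<epsilon> \<Longrightarrow> frechet_derivative f (at y) w \<le> 0 \<Longrightarrow>
       0 < s \<Longrightarrow> s \<le> T \<Longrightarrow> f (y + s *\<^sub>R w) < f y"
  defines "X \<equiv> sublevel f \<sigma>"
  obtains \<delta> where "0 < \<delta>"
    "\<And>x. x \<in> ball p \<delta> \<Longrightarrow> f x < \<sigma> \<Longrightarrow> frechet_derivative f (at x) w \<le> 0 \<Longrightarrow>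
       x \<in> connected_component_set X (p + T *\<^sub>R w)"
    "\<And>q. q \<in> ball p \<delta> \<Longrightarrow> q \<in> crit f \<Longrightarrow> f q \<le> \<sigma> \<Longrightarrow>
       q \<in> closure (connected_component_set X (p + T *\<^sub>R w))"
proof -
  have "f (p + T *\<^sub>R w) < f p"
    using descent[of p T] \<open>0 < \<epsilon>\<close> \<open>0 < T\<close> frechet_derivative_crit[OF p(1)] by simp
  then have "p + T *\<^sub>R w \<in> X"
    using p(2) by (simp add: X_def sublevel_def)
  then obtain e where "0 < e" "ball (p + T *\<^sub>R w) e \<subseteq> X"
    using open_sublevel[OF cont] by (metis X_def openE)
  define \<delta> where "\<delta> = min \<epsilon> e"
  have reach: "y + s *\<^sub>R w \<in> connected_component_set X (p + T *\<^sub>R w)"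
    if "y \<in> ball p \<delta>" "s \<le> T" "\<And>t. t \<in> {s..T} \<Longrightarrow> y + t *\<^sub>R w \<in> X" for y s
  proof (rule connected_component_via_line_to_ball[OF that(3,2)])
    show "ball (p + T *\<^sub>R w) \<delta> \<subseteq> X" "y + T *\<^sub>R w \<in> ball (p + T *\<^sub>R w) \<delta>"
      using \<open>ball (p + T *\<^sub>R w) e \<subseteq> X\<close> that(1) by (auto simp: \<delta>_def dist_norm)
  qed
  show thesis
  proof (rule that)
    show "0 < \<delta>"
      using \<open>0 < \<epsilon>\<close> \<open>0 < e\<close> by (simp add: \<delta>_def)
  next
    fix x assume x: "x \<in> ball p \<delta>" "f x < \<sigma>" "frechet_derivative f (at x) w \<le> 0"
    have "x + t *\<^sub>R w \<in> X" if "t \<in> {0..T}" for t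
      using descent[OF _ x(3), of t] x(1,2) that by (cases "t = 0") (auto simp: X_def sublevel_def \<delta>_def)
    then show "x \<in> connected_component_set X (p + T *\<^sub>R w)"
      using reach[OF x(1), of 0] \<open>0 < T\<close> by simp
  next
    fix q assume q: "q \<in> ball p \<delta>" "q \<in> crit f" "f q \<le> \<sigma>"
    have "q + s *\<^sub>R w \<in> connected_component_set X (p + T *\<^sub>R w)" if "s \<in> {0<..T}" for s
    proof (rule reach[OF q(1)])
      fix t assume "t \<in> {s..T}"
      then have "f (q + t *\<^sub>R w) < f q"
        using descent[of q t] q(1) that frechet_derivative_crit[OF q(2)] by (simp add: \<delta>_def)
      then show "q + t *\<^sub>R w \<in> X"
        using q(3) by (simp add: X_def sublevel_def)
    qed (use that in simp)
    then show "q \<in> closure (connected_component_set X (p + T *\<^sub>R w))"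
      by (rule start_mem_closure_of_ray[OF \<open>0 < T\<close>])
  qed
qed

lemma sublevel_near_saddle_point:
  fixes f :: "'a::euclidean_space \<Rightarrow> real"
  assumes sm: "smooth_on UNIV f" and p: "p \<in> crit f" "f p \<le> \<sigma>" and neg: "hess f p v v < 0"
  defines "X \<equiv> sublevel f \<sigma>"
  obtains \<epsilon> a1 a2 where "0 < \<epsilon>"
    "\<And>x. x \<in> ball p \<epsilon> \<Longrightarrow> f x < \<sigma> \<Longrightarrow>
       x \<in> connected_component_set X a1 \<or> x \<in> connected_component_set X a2"
    "\<And>q. q \<in> ball p \<epsilon> \<Longrightarrow> q \<in> crit f \<Longrightarrow> f q \<le> \<sigma> \<Longrightarrow>
       q \<in> closure (connected_component_set X a1) \<inter> closure (connected_component_set X a2)"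
proof -
  obtain \<epsilon> T where "0 < \<epsilon>" "0 < T"
    and descent: "\<And>w y s. w = v \<or> w = -v \<Longrightarrow> y \<in> ball p \<epsilon> \<Longrightarrow> frechet_derivative f (at y) w \<le> 0 \<Longrightarrow>
       0 < s \<Longrightarrow> s \<le> T \<Longrightarrow> f (y + s *\<^sub>R w) < f y"
    using descent_along_direction[OF sm neg] by blast
  have cont: "continuous_on UNIV f"
    using has_derivative_continuous[OF smooth_on_UNIV_has_derivative[OF sm]]
    by (simp add: continuous_at_imp_continuous_on)
  obtain \<delta>1 where "0 < \<delta>1"
    and sub1: "\<And>x. x \<in> ball p \<delta>1 \<Longrightarrow> f x < \<sigma> \<Longrightarrow> frechet_derivative f (at x) v \<le> 0 \<Longrightarrow>
       x \<in> connected_component_set X (p + T *\<^sub>R v)"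
    and crit1: "\<And>q. q \<in> ball p \<delta>1 \<Longrightarrow> q \<in> crit f \<Longrightarrow> f q \<le> \<sigma> \<Longrightarrow>
       q \<in> closure (connected_component_set X (p + T *\<^sub>R v))"
    using sublevel_near_critical_point_along[OF cont p \<open>0 < \<epsilon>\<close> \<open>0 < T\<close> descent[OF disjI1[OF refl]]]
    unfolding X_def by blast
  obtain \<delta>2 where "0 < \<delta>2"
    and sub2: "\<And>x. x \<in> ball p \<delta>2 \<Longrightarrow> f x < \<sigma> \<Longrightarrow> frechet_derivative f (at x) (-v) \<le> 0 \<Longrightarrow>
       x \<in> connected_component_set X (p + T *\<^sub>R (-v))"
    and crit2: "\<And>q. q \<in> ball p \<delta>2 \<Longrightarrow> q \<in> crit f \<Longrightarrow> f q \<le> \<sigma> \<Longrightarrow>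
       q \<in> closure (connected_component_set X (p + T *\<^sub>R (-v)))"
    using sublevel_near_critical_point_along[OF cont p \<open>0 < \<epsilon>\<close> \<open>0 < T\<close> descent[OF disjI2[OF refl]]]
    unfolding X_def by blast
  have Df_neg: "frechet_derivative f (at x) (-v) = - frechet_derivative f (at x) v" for x
    using linear_neg[OF has_derivative_linear[OF smooth_on_UNIV_has_derivative[OF sm]]] .
  show thesis
  proof (rule that[of "min \<delta>1 \<delta>2" "p + T *\<^sub>R v" "p + T *\<^sub>R (-v)"])
    fix x assume "x \<in> ball p (min \<delta>1 \<delta>2)" "f x < \<sigma>"
    then show "x \<in> connected_component_set X (p + T *\<^sub>R v) \<or> x \<in> connected_component_set X (p + T *\<^sub>R (-v))"
      using sub1[of x] sub2[of x] Df_neg[of x] by force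
  next
    fix q assume "q \<in> ball p (min \<delta>1 \<delta>2)" "q \<in> crit f" "f q \<le> \<sigma>"
    then show "q \<in> closure (connected_component_set X (p + T *\<^sub>R v)) \<inter> closure (connected_component_set X (p + T *\<^sub>R (-v)))"
      using crit1[of q] crit2[of q] by simp
  qed (simp add: \<open>0 < \<delta>1\<close> \<open>0 < \<delta>2\<close>)
qed

lemma tube_mono: "r \<le> r' \<Longrightarrow> tube \<Gamma> r \<subseteq> tube \<Gamma> r'"
  by (auto simp: tube_def)

lemma tube_meets_if_closure_meets:
  assumes "\<Gamma> \<inter> closure B \<noteq> {}" "0 < r"
  shows "B \<inter> tube \<Gamma> r \<noteq> {}"
proof -
  obtain p where "p \<in> \<Gamma>" "p \<in> closure B"
    using assms(1) by blast
  moreover obtain y where "y \<in> B" "dist y p < r"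
    using \<open>p \<in> closure B\<close> assms(2) unfolding closure_approachable by blast
  ultimately have "y \<in> B \<inter> tube \<Gamma> r"
    unfolding tube_def by (auto simp: dist_commute)
  then show ?thesis
    by blast
qed

lemma touching_components_subset:
  assumes "0 < r" "sublevel f \<sigma> \<inter> tube \<Gamma> r \<subseteq> C1 \<union> C2"
    and C: "C1 \<in> components (sublevel f \<sigma>)" "C2 \<in> components (sublevel f \<sigma>)"
  shows "{B \<in> components (sublevel f \<sigma>). \<Gamma> \<inter> closure B \<noteq> {}} \<subseteq> {C1, C2}"
proof
  fix B assume "B \<in> {B \<in> components (sublevel f \<sigma>). \<Gamma> \<inter> closure B \<noteq> {}}"
  then have B: "B \<in> components (sublevel f \<sigma>)" "B \<inter> tube \<Gamma> r \<noteq> {}"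
    using tube_meets_if_closure_meets \<open>0 < r\<close> by auto
  then have "B \<inter> (C1 \<union> C2) \<noteq> {}"
    using assms(2) in_components_subset[OF B(1)] by blast
  then show "B \<in> {C1, C2}"
    using components_eq[OF B(1) C(1)] components_eq[OF B(1) C(2)] by blast
qed

lemma separating_small_radius:
  assumes "separating f \<Gamma> \<sigma>" "0 < r"
  obtains r' C1 C2 where "0 < r'" "r' \<le> r"
    "C1 \<in> components (sublevel f \<sigma>)" "C2 \<in> components (sublevel f \<sigma>)" "C1 \<inter> C2 = {}"
    "C1 \<inter> tube \<Gamma> r' \<noteq> {}" "C2 \<inter> tube \<Gamma> r' \<noteq> {}"
    "sublevel f \<sigma> \<inter> tube \<Gamma> r' \<subseteq> C1 \<union> C2"
proof -
  obtain r0 where "0 < r0" and sep: "\<forall>r'. 0 < r' \<and> r' < r0 \<longrightarrow>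
      (\<exists>A1 A2. A1 \<noteq> A2 \<and> components (sublevel f \<sigma> \<inter> tube \<Gamma> r') = {A1, A2} \<and>
        (\<exists>C1\<in>components (sublevel f \<sigma>). \<exists>C2\<in>components (sublevel f \<sigma>).
           C1 \<inter> C2 = {} \<and> A1 \<subseteq> C1 \<and> A2 \<subseteq> C2))"
    using assms(1) unfolding separating_def by (elim exE conjE)
  define r' where "r' = min r (r0 / 2)"
  have r': "0 < r'" "r' \<le> r" "r' < r0"
    using \<open>0 < r0\<close> assms(2) by (auto simp: r'_def)
  obtain A1 A2 C1 C2 where A: "components (sublevel f \<sigma> \<inter> tube \<Gamma> r') = {A1, A2}"
    and C: "C1 \<in> components (sublevel f \<sigma>)" "C2 \<in> components (sublevel f \<sigma>)" "C1 \<inter> C2 = {}"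
    and AC: "A1 \<subseteq> C1" "A2 \<subseteq> C2"
    using sep[rule_format, OF conjI[OF r'(1,3)]] by (elim exE conjE bexE) (rule that; assumption)
  have "A1 \<noteq> {}" "A2 \<noteq> {}"
    using in_components_nonempty A by blast+
  moreover have "A1 \<union> A2 = sublevel f \<sigma> \<inter> tube \<Gamma> r'"
    using Union_components[of "sublevel f \<sigma> \<inter> tube \<Gamma> r'"] A by simp
  ultimately show thesis
    using AC by (intro that[OF r'(1,2) C]) blast+
qed

lemma separating_tube_not_in_component:
  assumes "separating f \<Gamma> \<sigma>" "0 < r" "C \<in> components (sublevel f \<sigma>)"
  shows "\<not> sublevel f \<sigma> \<inter> tube \<Gamma> r \<subseteq> C"
proof
  assume in_C: "sublevel f \<sigma> \<inter> tube \<Gamma> r \<subseteq> C"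
  obtain r' C1 C2 where "r' \<le> r" and C: "C1 \<in> components (sublevel f \<sigma>)" "C2 \<in> components (sublevel f \<sigma>)"
    and "C1 \<inter> C2 = {}" "C1 \<inter> tube \<Gamma> r' \<noteq> {}" "C2 \<inter> tube \<Gamma> r' \<noteq> {}"
    using separating_small_radius[OF assms(1,2)] by metis
  moreover have "C1 \<inter> tube \<Gamma> r' \<subseteq> C" "C2 \<inter> tube \<Gamma> r' \<subseteq> C"
    using in_C tube_mono[OF \<open>r' \<le> r\<close>] in_components_subset[OF C(1)] in_components_subset[OF C(2)]
    by blast+
  ultimately have "C1 = C" "C2 = C"
    using components_eq[OF _ assms(3)] by blast+
  with \<open>C1 \<inter> C2 = {}\<close> \<open>C1 \<inter> tube \<Gamma> r' \<noteq> {}\<close> show False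
    by blast
qed

lemma separating_closure_component_meets:
  assumes "compact \<Gamma>" "separating f \<Gamma> \<sigma>" "0 < r"
    and "C' \<in> components (sublevel f \<sigma>)" "sublevel f \<sigma> \<inter> tube \<Gamma> r \<subseteq> C \<union> C'"
  shows "\<Gamma> \<inter> closure C \<noteq> {}"
proof
  assume "\<Gamma> \<inter> closure C = {}"
  then obtain d where "0 < d" and far: "\<And>x y. x \<in> \<Gamma> \<Longrightarrow> y \<in> closure C \<Longrightarrow> d \<le> dist x y"
    using separate_compact_closed[OF assms(1) closed_closure] by metis
  have "sublevel f \<sigma> \<inter> tube \<Gamma> (min r d) \<subseteq> C'"
  proof
    fix y assume y: "y \<in> sublevel f \<sigma> \<inter> tube \<Gamma> (min r d)"
    then obtain x where "x \<in> \<Gamma>" "dist x y < min r d"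
      by (auto simp: tube_def)
    then have "y \<notin> C"
      using far closure_subset by fastforce
    moreover have "y \<in> sublevel f \<sigma> \<inter> tube \<Gamma> r"
      using y tube_mono[of "min r d" r \<Gamma>] by auto
    ultimately show "y \<in> C'"
      using assms(5) by blast
  qed
  then show False
    using separating_tube_not_in_component[OF assms(2) _ assms(4)] \<open>0 < d\<close> assms(3) by simp
qed

lemma subset_closure_component_if_meets:
  fixes f :: "'a::euclidean_space \<Rightarrow> real"
  assumes sm: "smooth_on UNIV f" and "connected \<Gamma>" "\<Gamma> \<subseteq> crit f" "\<And>q. q \<in> \<Gamma> \<Longrightarrow> f q \<le> \<sigma>"
    and neg: "\<And>p. p \<in> \<Gamma> \<Longrightarrow> \<exists>v. hess f p v v < 0"
    and B: "B \<in> components (sublevel f \<sigma>)" and "\<Gamma> \<inter> closure B \<noteq> {}"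
  shows "\<Gamma> \<subseteq> closure B"
proof -
  have "\<exists>\<epsilon>>0. \<forall>q\<in>\<Gamma>. dist q p < \<epsilon> \<longrightarrow> q \<in> closure B" if p: "p \<in> \<Gamma>" "p \<in> closure B" for p
  proof -
    obtain v where "hess f p v v < 0"
      using neg[OF p(1)] by blast
    moreover have "p \<in> crit f" "f p \<le> \<sigma>"
      using p(1) assms(3,4) by auto
    ultimately obtain \<epsilon> a1 a2 where "0 < \<epsilon>"
      and sub: "\<And>x. x \<in> ball p \<epsilon> \<Longrightarrow> f x < \<sigma> \<Longrightarrow>
         x \<in> connected_component_set (sublevel f \<sigma>) a1 \<or> x \<in> connected_component_set (sublevel f \<sigma>) a2"
      and crit: "\<And>q. q \<in> ball p \<epsilon> \<Longrightarrow> q \<in> crit f \<Longrightarrow> f q \<le> \<sigma> \<Longrightarrow>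
         q \<in> closure (connected_component_set (sublevel f \<sigma>) a1) \<inter> closure (connected_component_set (sublevel f \<sigma>) a2)"
      using sublevel_near_saddle_point[OF sm] by metis
    obtain y where "y \<in> B" "dist p y < \<epsilon>"
      using p(2) \<open>0 < \<epsilon>\<close> unfolding closure_approachable by (metis dist_commute)
    moreover have "f y < \<sigma>"
      using in_components_subset[OF B] \<open>y \<in> B\<close> by (auto simp: sublevel_def)
    ultimately obtain a where "a \<in> {a1, a2}" "y \<in> connected_component_set (sublevel f \<sigma>) a"
      using sub[of y] by auto
    then have "connected_component_set (sublevel f \<sigma>) a \<subseteq> B"
      using \<open>y \<in> B\<close> by (intro components_maximal[OF B]) (auto simp: connected_component_subset)
    moreover have "q \<in> closure (connected_component_set (sublevel f \<sigma>) a)"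
      if "q \<in> \<Gamma>" "dist q p < \<epsilon>" for q
      using crit[of q] that assms(3,4) \<open>a \<in> {a1, a2}\<close> by (auto simp: dist_commute)
    ultimately show ?thesis
      using \<open>0 < \<epsilon>\<close> closure_mono by blast
  qed
  then have "openin (top_of_set \<Gamma>) (\<Gamma> \<inter> closure B)"
    unfolding openin_euclidean_subtopology_iff by blast
  moreover have "closedin (top_of_set \<Gamma>) (\<Gamma> \<inter> closure B)"
    by (simp add: closedin_closed_Int)
  ultimately show ?thesis
    using \<open>connected \<Gamma>\<close> \<open>\<Gamma> \<inter> closure B \<noteq> {}\<close> unfolding connected_clopen by blast
qed

theorem lemma1p6:
  fixes f :: "'a::euclidean_space \<Rightarrow> real"
    and \<C> :: "'a set set" and \<Gamma> :: "'a set" and \<sigma> :: real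
  assumes "smooth_on UNIV f"
    and "morse_bott f \<C>"
    and "saddle_manifold f \<C> \<Gamma>"
    and "f ` \<Gamma> = {\<sigma>}"
    and "locally_separating f \<Gamma> \<sigma>"
    and "separating f \<Gamma> \<sigma>"
  shows "\<exists>Bp Bm. Bp \<noteq> Bm \<and>
           {B \<in> components (sublevel f \<sigma>). \<Gamma> \<inter> closure B \<noteq> {}} = {Bp, Bm} \<and>
           \<Gamma> \<subseteq> closure Bp \<inter> closure Bm"
proof -
  have "\<Gamma> \<in> \<C>"
    using assms(3) by (simp add: saddle_manifold_def)
  then have \<Gamma>: "\<Gamma> \<noteq> {}" "compact \<Gamma>" "connected \<Gamma>" "\<Gamma> \<subseteq> crit f"
    using assms(2) unfolding morse_bott_def by auto
  have level: "f q \<le> \<sigma>" if "q \<in> \<Gamma>" for q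
    using imageI[OF that, of f] assms(4) by simp
  have neg: "\<exists>v. hess f p v v < 0" if "p \<in> \<Gamma>" for p
    by (rule saddle_manifold_negative_direction[OF assms(1,3) that]) blast
  obtain r Cp Cm where "0 < r" "r \<le> 1"
    and C: "Cp \<in> components (sublevel f \<sigma>)" "Cm \<in> components (sublevel f \<sigma>)" "Cp \<inter> Cm = {}"
    and "Cp \<inter> tube \<Gamma> r \<noteq> {}" "Cm \<inter> tube \<Gamma> r \<noteq> {}"
    and split: "sublevel f \<sigma> \<inter> tube \<Gamma> r \<subseteq> Cp \<union> Cm"
    by (rule separating_small_radius[OF assms(6) zero_less_one])
  have touch: "\<Gamma> \<inter> closure Cp \<noteq> {}" "\<Gamma> \<inter> closure Cm \<noteq> {}"
    using separating_closure_component_meets[OF \<Gamma>(2) assms(6) \<open>0 < r\<close> C(2) split]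
      separating_closure_component_meets[OF \<Gamma>(2) assms(6) \<open>0 < r\<close> C(1)] split
    by (simp_all add: Un_commute)
  have spread: "\<Gamma> \<subseteq> closure Cp" "\<Gamma> \<subseteq> closure Cm"
    using subset_closure_component_if_meets[OF assms(1) \<Gamma>(3,4) level neg] C touch by simp_all
  have "{B \<in> components (sublevel f \<sigma>). \<Gamma> \<inter> closure B \<noteq> {}} \<subseteq> {Cp, Cm}"
    by (rule touching_components_subset[OF \<open>0 < r\<close> split C(1,2)])
  moreover have "{Cp, Cm} \<subseteq> {B \<in> components (sublevel f \<sigma>). \<Gamma> \<inter> closure B \<noteq> {}}"
    using C touch by simp
  moreover have "Cp \<noteq> Cm"
    using \<open>Cp \<inter> Cm = {}\<close> in_components_nonempty[OF C(1)] by blast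
  ultimately show ?thesis
    using spread by (intro exI[of _ Cp] exI[of _ Cm] conjI equalityI Int_greatest)
qed

end
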